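(* Let $c>2$ be a constant. For all sufficiently large $n$ and all $p$ with $\frac{c\log n}{n}\le p\le 1$, we have $g_i\le t_1$ for all $2\le i\le\lfloor n/2\rfloor$, where $t_i=\binom{n-1}{i-1}(1-p)^{i(n-i)}$ and $g_i=t_i+t_{n-i}=\binom{n}{i}(1-p)^{i(n-i)}$.
   Context: $\log$ is the natural logarithm. *)

theory Defs
  imports Complex_Main
begin

definition tfun :: "nat \<Rightarrow> real \<Rightarrow> nat \<Rightarrow> real" where
  "tfun n p i = real ((n - 1) choose (i - 1)) * (1 - p) ^ (i * (n - i))"

definition gfun :: "nat \<Rightarrow> real \<Rightarrow> nat \<Rightarrow> real" where
  "gfun n p i = tfun n p i + tfun n p (n - i)"

end

theory Submission
  imports Defs
begin

text \<open>
  Writing \<open>q = 1 - p\<close>, both summands of \<open>g\<^sub>i\<close> carry the factor \<open>q\<^bsup>i(n-i)\<^esup>\<close>, so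
  \<open>g\<^sub>i = C(n,i) q\<^bsup>i(n-i)\<^esup>\<close>, and \<open>i(n-i) = (n-1) + (i-1)(n-i-1)\<close> splits off \<open>t\<^sub>1 = q\<^bsup>n-1\<^esup>\<close>.
  It remains to see \<open>C(n,i) q\<^bsup>(i-1)(n-i-1)\<^esup> \<le> 1\<close>. Since \<open>q \<le> e\<^sup>-\<^sup>p \<le> n\<^bsup>-c/n\<^esup>\<close> and
  \<open>C(n,i) \<le> n\<^sup>i\<close>, this holds once \<open>i n \<le> c (i-1)(n-i-1)\<close>. The difference of the two sides
  is a concave quadratic in \<open>i\<close>, so it suffices to check it at \<open>i = 2\<close> and \<open>i = n/2\<close>, where
  it is \<open>(c-2)n - 3c\<close> and \<open>(c-2)n\<^sup>2/4 - cn + c\<close>; both are nonnegative for \<open>n \<ge> 4c/(c-2)\<close>.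
\<close>

lemma concave_quadratic_nonneg_between:
  fixes \<alpha> \<beta> \<gamma> a b x :: real
  assumes "\<alpha> \<le> 0" and "a \<le> x" and "x \<le> b"
    and "\<alpha> * a\<^sup>2 + \<beta> * a + \<gamma> \<ge> 0" and "\<alpha> * b\<^sup>2 + \<beta> * b + \<gamma> \<ge> 0"
  shows "\<alpha> * x\<^sup>2 + \<beta> * x + \<gamma> \<ge> 0"
proof (cases "a = b")
  case True
  with assms show ?thesis by simp
next
  case False
  define f where "f y = \<alpha> * y\<^sup>2 + \<beta> * y + \<gamma>" for y
  \<comment> \<open>\<open>f\<close> minus its chord through \<open>a, b\<close> is the quadratic \<open>\<alpha> (x - a) (x - b)\<close>\<close>
  have interpolation:
    "(b - a) * f x = (b - x) * f a + (x - a) * f b + \<alpha> * (x - a) * (x - b) * (b - a)"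
    unfolding f_def power2_eq_square by algebra
  have "\<alpha> * ((x - a) * (x - b)) \<ge> 0"
    using assms(1-3) by (intro mult_nonpos_nonpos) (auto simp: mult_nonneg_nonpos)
  then have "(b - a) * f x \<ge> 0"
    using assms(2-5) interpolation unfolding f_def
    by (smt (verit) mult_nonneg_nonneg mult.assoc)
  with False assms(2,3) have "f x \<ge> 0"
    by (simp add: zero_le_mult_iff)
  then show ?thesis unfolding f_def .
qed

lemma exponent_dominates_log_binomial:
  fixes c :: real and n i :: nat
  assumes "c > 2" and "real n \<ge> 4 * c / (c - 2)" and "2 \<le> i" and "2 * i \<le> n"
  shows "real i * real n \<le> c * ((real i - 1) * (real n - real i - 1))"
proof -
  have n_large: "(c - 2) * real n \<ge> 4 * c"
    using assms(1,2) by (simp add: field_simps)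
  have "(- c) * (real i)\<^sup>2 + ((c - 1) * real n) * real i + (- c * (real n - 1)) \<ge> 0"
  proof (rule concave_quadratic_nonneg_between[where a = 2 and b = "real n / 2"])
    show "(- c) * 2\<^sup>2 + ((c - 1) * real n) * 2 + (- c * (real n - 1)) \<ge> 0"
      using n_large assms(1) by (simp add: algebra_simps power2_eq_square)
    have "(c - 2) * real n * real n \<ge> 4 * c * real n"
      using n_large by (simp add: mult_right_mono)
    then show "(- c) * (real n / 2)\<^sup>2 + ((c - 1) * real n) * (real n / 2) + (- c * (real n - 1)) \<ge> 0"
      using assms(1) by (simp add: algebra_simps power2_eq_square)
  qed (use assms in auto)
  then show ?thesis
    by (simp add: algebra_simps power2_eq_square)
qed

lemma gfun_eq:
  assumes "0 < i" and "i < n"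
  shows "gfun n p i = real (n choose i) * (1 - p) ^ (i * (n - i))"
proof -
  have "(n - 1 choose (n - i - 1)) = (n - 1 choose i)"
    using assms binomial_symmetric[of i "n - 1"] by (simp add: diff_diff_add)
  moreover have "n choose i = (n - 1 choose (i - 1)) + (n - 1 choose i)"
    using assms binomial_Suc_Suc[of "n - 1" "i - 1"] by simp
  moreover have "n - (n - i) = i"
    using assms by simp
  ultimately show ?thesis
    by (simp add: gfun_def tfun_def mult.commute distrib_left)
qed

lemma mult_diff_eq_pred_add:
  fixes n i :: nat
  assumes "0 < i" and "i < n"
  shows "i * (n - i) = (n - 1) + (i - 1) * (n - i - 1)"
proof -
  obtain j m where "i = Suc j" and "n = Suc j + Suc m"
    using assms by (metis add_Suc_right gr0_implies_Suc less_imp_Suc_add)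
  then show ?thesis
    by (simp add: algebra_simps)
qed

lemma one_minus_power_le_exp:
  fixes p :: real
  assumes "p \<le> 1"
  shows "(1 - p) ^ k \<le> exp (- p * real k)"
proof -
  have "(1 - p) ^ k \<le> exp (- p) ^ k"
    using assms exp_ge_add_one_self[of "- p"] by (intro power_mono) auto
  then show ?thesis
    by (simp add: exp_of_nat_mult[symmetric] mult.commute)
qed

lemma binomial_times_power_le_one:
  fixes c p :: real and n i k :: nat
  assumes "n > 0" and "i \<le> n" and "p \<le> 1" and p_ge: "c * ln (real n) / real n \<le> p"
    and exponent: "real i * real n \<le> c * real k"
  shows "real (n choose i) * (1 - p) ^ k \<le> 1"
proof -
  have ln_nonneg: "ln (real n) \<ge> 0"
    using assms(1) by simp
  have "real i * ln (real n) \<le> c * real k * ln (real n) / real n"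
    using mult_right_mono[OF exponent ln_nonneg] assms(1) by (simp add: field_simps)
  also have "\<dots> \<le> p * real k"
    using mult_right_mono[OF p_ge, of "real k"] by (simp add: field_simps)
  finally have "exp (- p * real k) \<le> exp (- (real i * ln (real n)))"
    by simp
  also have "\<dots> = inverse (real n ^ i)"
    using assms(1) by (simp add: exp_minus exp_of_nat_mult)
  finally have power_le: "(1 - p) ^ k \<le> inverse (real n ^ i)"
    by (rule order_trans[OF one_minus_power_le_exp[OF assms(3)]])
  have "real (n choose i) \<le> real n ^ i"
    using binomial_le_pow[OF assms(2)] by (metis of_nat_le_iff of_nat_power)
  then have "real (n choose i) * (1 - p) ^ k \<le> real n ^ i * inverse (real n ^ i)"
    using power_le assms(3) by (intro mult_mono) auto
  then show ?thesis
    using assms(1) by simp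
qed

theorem lemma20:
  fixes c :: real
  assumes "c > 2"
  shows "\<exists>N::nat. \<forall>n\<ge>N. \<forall>p::real. c * ln (real n) / real n \<le> p \<and> p \<le> 1 \<longrightarrow>
           (\<forall>i::nat. 2 \<le> i \<and> i \<le> n div 2 \<longrightarrow> gfun n p i \<le> tfun n p 1)"
proof (intro exI allI impI conjI)
  fix n i :: nat and p :: real
  assume "nat \<lceil>4 * c / (c - 2)\<rceil> \<le> n" and p: "c * ln (real n) / real n \<le> p \<and> p \<le> 1"
    and i: "2 \<le> i \<and> i \<le> n div 2"
  then have n: "real n \<ge> 4 * c / (c - 2)"
    by linarith
  have "2 * i \<le> n" and "0 < i" and "i < n"
    using i by auto
  define k where "k = (i - 1) * (n - i - 1)"
  have "real k = (real i - 1) * (real n - real i - 1)"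
    using \<open>0 < i\<close> \<open>2 * i \<le> n\<close> by (simp add: k_def of_nat_diff)
  then have "real (n choose i) * (1 - p) ^ k \<le> 1"
    using binomial_times_power_le_one[of n i p c k] exponent_dominates_log_binomial[OF assms n]
      i p \<open>2 * i \<le> n\<close> \<open>i < n\<close> by simp
  moreover have "gfun n p i = (1 - p) ^ (n - 1) * (real (n choose i) * (1 - p) ^ k)"
    using gfun_eq[OF \<open>0 < i\<close> \<open>i < n\<close>] mult_diff_eq_pred_add[OF \<open>0 < i\<close> \<open>i < n\<close>]
    by (simp add: k_def power_add)
  ultimately show "gfun n p i \<le> tfun n p 1"
    using p by (simp add: tfun_def mult_left_le)
qed

end
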